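(* Fix $t\in(0,1)$ and let $A\in\{0,1\}^{n\times n}$. Suppose $\widehat{Y}$ is the unique optimal solution of the convex program $$\max_{Y\in\mathbb{R}^{n\times n}}\ c_{A}\sum_{(i,j):a_{ij}=1}y_{ij}-c_{A^c}\sum_{(i,j):a_{ij}=0}y_{ij}-48\sqrt{n}\,\|Y\|_*\quad\text{s.t. } 0\le y_{ij}\le 1\ \ \forall i,j,$$ with input $A$, where $c_{A}=\sqrt{(1-t)/t}$ and $c_{A^c}=\sqrt{t/(1-t)}$. Let $\widetilde{A}\in\{0,1\}^{n\times n}$ be obtained from $A$ by (a) choosing some pairs $(i,j)$ with $\widehat{y}_{ij}=1$ and $a_{ij}=0$ and setting $\widetilde{a}_{ij}=1$, and (b) choosing some pairs $(i,j)$ with $\widehat{y}_{ij}=0$ and $a_{ij}=1$ and setting $\widetilde{a}_{ij}=0$ (all other entries unchanged). Then $\widehat{Y}$ is also the unique optimal solution of the same program with $\widetilde{A}$ as input.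
   Context: $\|Y\|_*$ denotes the nuclear norm (sum of singular values). The sums run over ordered pairs $(i,j)\in\{1,\dots,n\}^2$, including diagonal pairs. The paper states this lemma in the setting of the stochastic blockmodel with in-cluster edge density $p$ larger than cross-cluster density $q$ ($p>q$), although the program itself depends only on $A$ and $t$. *)

theory Defs
  imports "HOL-Analysis.Analysis"
begin

definition diag_mat :: "('n::finite \<Rightarrow> real) \<Rightarrow> real^'n^'n" where
  "diag_mat s = (\<chi> i j. if i = j then s i else 0)"

text \<open>Nuclear norm: sum of singular values, taken from a singular value
  decomposition Y = U diag(s) V^T with U, V orthogonal and s nonnegative
  (the multiset of singular values, hence their sum, is unique).\<close>
definition nuclear_norm :: "real^'n::finite^'n \<Rightarrow> real" where
  "nuclear_norm Y = (THE x. \<exists>U V s. orthogonal_matrix U \<and> orthogonal_matrix V \<and>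
       (\<forall>i. 0 \<le> s i) \<and> Y = U ** diag_mat s ** transpose V \<and> x = (\<Sum>i\<in>UNIV. s i))"

definition feasible :: "real^'n::finite^'n \<Rightarrow> bool" where
  "feasible Y \<longleftrightarrow> (\<forall>i j. 0 \<le> Y$i$j \<and> Y$i$j \<le> 1)"

definition binary_mat :: "real^'n::finite^'n \<Rightarrow> bool" where
  "binary_mat A \<longleftrightarrow> (\<forall>i j. A$i$j = 0 \<or> A$i$j = 1)"

definition objective :: "real \<Rightarrow> real^'n::finite^'n \<Rightarrow> real^'n^'n \<Rightarrow> real" where
  "objective t A Y =
     sqrt ((1 - t) / t) * (\<Sum>(i,j)\<in>{(i,j). A$i$j = 1}. Y$i$j)
   - sqrt (t / (1 - t)) * (\<Sum>(i,j)\<in>{(i,j). A$i$j = 0}. Y$i$j)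
   - 48 * sqrt (real CARD('n)) * nuclear_norm Y"

definition unique_optimal :: "real \<Rightarrow> real^'n::finite^'n \<Rightarrow> real^'n^'n \<Rightarrow> bool" where
  "unique_optimal t A Y \<longleftrightarrow> feasible Y \<and>
     (\<forall>Y'. feasible Y' \<and> Y' \<noteq> Y \<longrightarrow> objective t A Y' < objective t A Y)"

end

theory Submission
  imports Defs
begin

text \<open>Changing the input only changes the linear part of the objective, by the entrywise weight
  difference. At an entry flipped from 0 to 1 this difference is positive and \<open>Yh\<close> already sits
  at the upper bound 1; at an entry flipped from 1 to 0 it is negative and \<open>Yh\<close> sits at 0. So
  \<open>Yh\<close> maximises the change of the objective over the feasible box, and strict optimality
  for \<open>A\<close> carries over to the modified input.\<close>

text \<open>Entries of \<open>A\<close> other than 0 and 1 get weight 0, matching the two sums of the objective.\<close>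
definition entry_weight :: "real \<Rightarrow> real \<Rightarrow> real" where
  "entry_weight t a = (if a = 1 then sqrt ((1 - t) / t)
     else if a = 0 then - sqrt (t / (1 - t)) else 0)"

lemma entry_weight_0_le_1:
  assumes "0 < t" and "t < 1"
  shows "entry_weight t 0 \<le> entry_weight t 1"
proof -
  have "0 \<le> t / (1 - t)" "0 \<le> (1 - t) / t" using assms by simp_all
  then show ?thesis unfolding entry_weight_def
    by (smt (verit) real_sqrt_ge_zero)
qed

lemma sum_entries_eq:
  fixes A Y :: "real^'n::finite^'n"
  shows "(\<Sum>(i,j)\<in>{(i,j). A$i$j = c}. Y$i$j) = (\<Sum>(i,j)\<in>UNIV. if A$i$j = c then Y$i$j else 0)"
proof -
  have "{(i,j). A$i$j = c} = {p\<in>UNIV. A$fst p$snd p = c}" by auto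
  then show ?thesis
    by (simp add: sum.inter_filter[symmetric] case_prod_beta)
qed

lemma objective_eq_weighted_sum:
  fixes A Y :: "real^'n::finite^'n"
  shows "objective t A Y = (\<Sum>(i,j)\<in>UNIV. entry_weight t (A$i$j) * Y$i$j)
     - 48 * sqrt (real CARD('n)) * nuclear_norm Y"
proof -
  have "(\<Sum>(i,j)\<in>UNIV. entry_weight t (A$i$j) * Y$i$j) =
    sqrt ((1 - t) / t) * (\<Sum>(i,j)\<in>UNIV. if A$i$j = 1 then Y$i$j else 0)
    - sqrt (t / (1 - t)) * (\<Sum>(i,j)\<in>UNIV. if A$i$j = 0 then Y$i$j else 0)"
    unfolding sum_distrib_left sum_subtractf[symmetric]
    by (rule sum.cong) (auto simp: entry_weight_def)
  then show ?thesis unfolding objective_def sum_entries_eq by simp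
qed

lemma objective_change_input:
  fixes A B Y :: "real^'n::finite^'n"
  shows "objective t B Y - objective t A Y
     = (\<Sum>(i,j)\<in>UNIV. (entry_weight t (B$i$j) - entry_weight t (A$i$j)) * Y$i$j)"
  unfolding objective_eq_weighted_sum
  by (simp add: sum_subtractf[symmetric] case_prod_beta left_diff_distrib)

lemma unique_optimal_if_gain_maximal:
  fixes A B Y :: "real^'n::finite^'n"
  assumes opt: "unique_optimal t A Y"
    and gain: "\<And>Y'. feasible Y' \<Longrightarrow>
      objective t B Y' - objective t A Y' \<le> objective t B Y - objective t A Y"
  shows "unique_optimal t B Y"
  unfolding unique_optimal_def
proof (intro conjI allI impI)
  show "feasible Y" using opt unfolding unique_optimal_def by blast
  fix Y' assume Y': "feasible Y' \<and> Y' \<noteq> Y"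
  then have "objective t A Y' < objective t A Y"
    using opt unfolding unique_optimal_def by blast
  with gain[of Y'] Y' show "objective t B Y' < objective t B Y" by linarith
qed

lemma weight_change_maximal_at_bound:
  assumes "0 < t" and "t < 1" and "0 \<le> y" and "y \<le> 1"
    and "b \<noteq> a \<longrightarrow> (yh = 1 \<and> a = 0 \<and> b = 1) \<or> (yh = 0 \<and> a = 1 \<and> b = 0)"
  shows "(entry_weight t b - entry_weight t a) * y \<le> (entry_weight t b - entry_weight t a) * yh"
proof -
  have mono: "entry_weight t 0 \<le> entry_weight t 1"
    using assms(1,2) by (rule entry_weight_0_le_1)
  consider "b = a" | "yh = 1" "a = 0" "b = 1" | "yh = 0" "a = 1" "b = 0"
    using assms(5) by blast
  then show ?thesis
  proof cases
    case 2
    then show ?thesis using mono assms(4) by (simp add: mult_left_le)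
  next
    case 3
    then show ?thesis using mono assms(3) by (simp add: mult_nonpos_nonneg)
  qed simp
qed

theorem lemma1:
  fixes t :: real and A At Yh :: "real^'n::finite^'n"
  assumes "0 < t" and "t < 1"
    and "binary_mat A" and "binary_mat At"
    and "unique_optimal t A Yh"
    and "\<forall>i j. At$i$j \<noteq> A$i$j \<longrightarrow>
            (Yh$i$j = 1 \<and> A$i$j = 0 \<and> At$i$j = 1) \<or>
            (Yh$i$j = 0 \<and> A$i$j = 1 \<and> At$i$j = 0)"
  shows "unique_optimal t At Yh"
  using assms(5)
proof (rule unique_optimal_if_gain_maximal)
  fix Y :: "real^'n^'n" assume "feasible Y"
  then have "(entry_weight t (At$i$j) - entry_weight t (A$i$j)) * Y$i$j
      \<le> (entry_weight t (At$i$j) - entry_weight t (A$i$j)) * Yh$i$j" for i j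
    using assms(1,2,6) unfolding feasible_def
    by (intro weight_change_maximal_at_bound) auto
  then show "objective t At Y - objective t A Y \<le> objective t At Yh - objective t A Yh"
    unfolding objective_change_input by (intro sum_mono) (simp add: case_prod_beta)
qed

end
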